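(* Let $m,K,R\ge 1$ and let $N$ be an even positive integer. Let $\mathbf{P}\in\mathbb{F}_2^{N\times N}$ satisfy $\mathbf{P}\mathbf{P}^T=\mathbf{I}_N$, let $a,b\in\mathbb{F}_{2^m}$ be nonzero with $a\neq b$, and set $c=\frac{a}{a^2+b^2}$, $d=\frac{b}{a^2+b^2}$. Let $\mathbf{H}\in\mathbb{F}_2^{R\times N}$ and $\mathbf{G}\in\mathbb{F}_{2^m}^{K\times N}$ satisfy $\mathbf{G}\mathbf{H}^T=\mathbf{0}_{K\times R}$. Define $\mathbf{G}_{pub}=\mathbf{G}\,(\mathbf{P}_{c,d})^T$ and $\widetilde{\mathbf{H}}=\mathbf{H}\,(\mathbf{P}_{a,b})^T$. Then every entry of $\widetilde{\mathbf{H}}$ lies in the $\mathbb{F}_2$-linear span $\langle a,b\rangle_{\mathbb{F}_2}$, and $$\mathbf{G}_{pub}\,\widetilde{\mathbf{H}}^T=\mathbf{0}_{K\times R}.$$ In particular, the $\mathbb{F}_{2^m}$-linear code generated by the rows of $\mathbf{G}_{pub}$ is contained in the code $\{\mathbf{x}\in\mathbb{F}_{2^m}^N:\widetilde{\mathbf{H}}\mathbf{x}^T=\mathbf{0}\}$.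
   Context: For a binary matrix $\mathbf{P}=(p_{i,j})$ and two nonzero distinct elements $a,b\in\mathbb{F}_{2^m}$, $\mathbf{P}_{a,b}=(\tilde p_{i,j})$ denotes the matrix of the same size with entries in $\mathbb{F}_{2^m}$ given by $\tilde p_{i,j}=a$ if $p_{i,j}=0$ and $\tilde p_{i,j}=b$ if $p_{i,j}=1$. $\langle x_1,\dots,x_k\rangle_{\mathbb{F}_2}$ denotes the $\mathbb{F}_2$-vector space spanned by $x_1,\dots,x_k$. *)

theory Defs
  imports "HOL-Library.Z2" "Jordan_Normal_Form.Matrix"
begin

definition subst_mat :: "'a \<Rightarrow> 'a \<Rightarrow> bit mat \<Rightarrow> 'a mat" where
  "subst_mat a b P = map_mat (\<lambda>p. if p = 0 then a else b) P"

definition embed_mat :: "bit mat \<Rightarrow> 'a::ring_1 mat" where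
  "embed_mat H = map_mat of_bit H"

definition F2_span2 :: "'a::ring_1 \<Rightarrow> 'a \<Rightarrow> 'a set" where
  "F2_span2 a b = {of_bit u * a + of_bit v * b | u v :: bit. True}"

end

theory Submission
  imports Defs "HOL-Library.Disjoint_Sets" "Jordan_Normal_Form.Determinant"
begin

text \<open>Over a field of characteristic 2, \<open>P\<^sub>x\<^sub>,\<^sub>y = x J + (y - x) P\<close> with \<open>J\<close> the all-ones
  matrix. An orthogonal binary \<open>P\<close> satisfies \<open>P\<^sup>T P = I\<close> and has columns of odd weight,
  so \<open>J\<^sup>T P = P\<^sup>T J = J\<close>, while \<open>J\<^sup>T J = N J = 0\<close> for even \<open>N\<close>. Hence
  \<open>(P\<^sub>c\<^sub>,\<^sub>d)\<^sup>T P\<^sub>a\<^sub>,\<^sub>b = (c (b - a) + a (d - c)) J + (d - c) (b - a) I\<close>, and the choice of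
  \<open>c, d\<close> makes this \<open>I\<close>. The public generator matrix is thus orthogonal to the
  transformed parity-check matrix: \<open>G (P\<^sub>c\<^sub>,\<^sub>d)\<^sup>T P\<^sub>a\<^sub>,\<^sub>b H\<^sup>T = G H\<^sup>T = 0\<close>.
  Writing \<open>P\<^sub>a\<^sub>,\<^sub>b = a (J + P) + b P\<close> shows that the entries of \<open>H (P\<^sub>a\<^sub>,\<^sub>b)\<^sup>T\<close> lie in
  \<open>\<langle>a, b\<rangle>\<^sub>F\<^sub>2\<close>.\<close>

lemma even_card_if_fixpoint_free_involution:
  assumes "\<And>x. x \<in> X \<Longrightarrow> h x \<in> X" "\<And>x. x \<in> X \<Longrightarrow> h (h x) = x"
    and "\<And>x. x \<in> X \<Longrightarrow> h x \<noteq> x"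
  shows "even (card X)"
proof -
  have "(\<Sum>x\<in>X. 1 :: bit) = 0"
    by (rule sum_involution_eq_0[where h = h]) (use assms in auto)
  then have "(of_nat (card X) :: bit) = 0" by simp
  then show ?thesis by (metis even_of_nat_iff even_zero)
qed

text \<open>If \<open>2 \<noteq> 0\<close>, negation is a fixpoint-free involution on the odd number of nonzero elements.\<close>

lemma CHAR_eq_2_if_even_card:
  assumes "even (card (UNIV :: 'a::{field,finite} set))"
  shows "CHAR('a) = 2"
proof -
  have "(2::'a) = 0"
  proof (rule ccontr)
    assume two: "(2::'a) \<noteq> 0"
    have "-x \<noteq> x" if "x \<noteq> 0" for x :: 'a
    proof
      assume "-x = x"
      then have "2 * x = 0" by (metis mult_2 neg_eq_iff_add_eq_0)
      with two that show False by simp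
    qed
    then have "even (card (UNIV - {0::'a}))"
      by (intro even_card_if_fixpoint_free_involution[where h = uminus]) auto
    with assms show False by (simp add: card_Diff_singleton)
  qed
  then have "CHAR('a) dvd 2" by (metis of_nat_eq_0_iff_char_dvd of_nat_numeral)
  moreover have "CHAR('a) \<noteq> 1" by simp
  ultimately show ?thesis using two_is_prime_nat prime_nat_iff by blast
qed

lemma CHAR_2_add_self: "CHAR('a::ring_1) = 2 \<Longrightarrow> (x :: 'a) + x = 0"
  using add.right_inverse[of x] uminus_CHAR_2[of x] by simp

lemma of_bit_add:
  assumes "CHAR('a::ring_1) = 2"
  shows "(of_bit (x + y) :: 'a) = of_bit x + of_bit y"
  using CHAR_2_add_self[OF assms, of 1] by (cases x; cases y) auto

lemma of_bit_mult: "(of_bit (x * y) :: 'a::semiring_1) = of_bit x * of_bit y"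
  by (cases x; cases y) auto

lemma of_bit_sum:
  assumes "CHAR('a::ring_1) = 2"
  shows "(of_bit (sum f A) :: 'a) = (\<Sum>k\<in>A. of_bit (f k))"
proof (induction A rule: infinite_finite_induct)
  case (insert x F)
  then show ?case by (simp only: sum.insert of_bit_add[OF assms] not_False_eq_True)
qed simp_all

lemma if_bit_eq_0: "(if p = 0 then x else y) = x + (y - x) * (of_bit p :: 'a::ring_1)"
  by (cases p) auto

lemma index_embed_mat [simp]:
  "i < dim_row A \<Longrightarrow> j < dim_col A \<Longrightarrow> embed_mat A $$ (i, j) = of_bit (A $$ (i, j))"
  by (simp add: embed_mat_def)

lemma dim_embed_mat [simp]:
  "dim_row (embed_mat A) = dim_row A" "dim_col (embed_mat A) = dim_col A"
  by (simp_all add: embed_mat_def)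

lemma index_subst_mat [simp]:
  "i < dim_row A \<Longrightarrow> j < dim_col A \<Longrightarrow>
    subst_mat x y A $$ (i, j) = (if A $$ (i, j) = 0 then x else y)"
  by (simp add: subst_mat_def)

lemma dim_subst_mat [simp]:
  "dim_row (subst_mat x y A) = dim_row A" "dim_col (subst_mat x y A) = dim_col A"
  by (simp_all add: subst_mat_def)

lemma embed_mat_mult:
  assumes "CHAR('a::ring_1) = 2" "A \<in> carrier_mat n k" "B \<in> carrier_mat k l"
  shows "(embed_mat (A * B) :: 'a mat) = embed_mat A * embed_mat B"
proof (rule eq_matI)
  fix i j assume "i < dim_row (embed_mat A * embed_mat B :: 'a mat)"
    "j < dim_col (embed_mat A * embed_mat B :: 'a mat)"
  then have ij: "i < n" "j < l" using assms(2,3) by auto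
  have "(A * B) $$ (i, j) = (\<Sum>h<k. A $$ (i, h) * B $$ (h, j))"
    using assms(2,3) ij by (simp add: scalar_prod_def lessThan_atLeast0)
  then have "(embed_mat (A * B) :: 'a mat) $$ (i, j) = of_bit (\<Sum>h<k. A $$ (i, h) * B $$ (h, j))"
    using index_embed_mat[of i "A * B" j] assms(2,3) ij by (metis carrier_matD index_mult_mat(2,3))
  also have "\<dots> = (\<Sum>h<k. of_bit (A $$ (i, h)) * of_bit (B $$ (h, j)))"
    by (simp only: of_bit_sum[OF assms(1)] of_bit_mult)
  also have "\<dots> = (embed_mat A * embed_mat B :: 'a mat) $$ (i, j)"
    using assms(2,3) ij by (simp add: scalar_prod_def lessThan_atLeast0)
  finally show "embed_mat (A * B) $$ (i, j) = (embed_mat A * embed_mat B :: 'a mat) $$ (i, j)" .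
qed (use assms(2,3) in auto)

lemma embed_mat_one [simp]: "embed_mat (1\<^sub>m n) = 1\<^sub>m n"
  by (intro eq_matI) (auto simp: embed_mat_def)

lemma embed_mat_transpose: "embed_mat (transpose_mat A) = transpose_mat (embed_mat A)"
  by (intro eq_matI) (auto simp: embed_mat_def)

lemma orthogonal_embed_columns:
  fixes P :: "bit mat"
  assumes "CHAR('a::ring_1) = 2" "P \<in> carrier_mat N N" "P * transpose_mat P = 1\<^sub>m N"
    and "i < N" "j < N"
  shows "(\<Sum>k<N. (of_bit (P $$ (k, i)) :: 'a) * of_bit (P $$ (k, j))) = (if i = j then 1 else 0)"
proof -
  have "transpose_mat P \<in> carrier_mat N N" using assms(2) by simp
  then have "transpose_mat (embed_mat P) * embed_mat P = (embed_mat (transpose_mat P * P) :: 'a mat)"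
    by (simp only: embed_mat_mult[OF assms(1) _ assms(2)] embed_mat_transpose)
  also have "\<dots> = 1\<^sub>m N"
    using mat_mult_left_right_inverse[OF assms(2) _ assms(3)] assms(2) by simp
  finally have "(transpose_mat (embed_mat P) * embed_mat P :: 'a mat) $$ (i, j) = 1\<^sub>m N $$ (i, j)"
    by (rule arg_cong)
  moreover have "(transpose_mat (embed_mat P) * embed_mat P :: 'a mat) $$ (i, j)
      = (\<Sum>k<N. (of_bit (P $$ (k, i)) :: 'a) * of_bit (P $$ (k, j)))"
    using assms(2,4,5) by (simp add: scalar_prod_def lessThan_atLeast0)
  ultimately show ?thesis using assms(4,5) by simp
qed

lemma odd_embed_column_weight:
  fixes P :: "bit mat"
  assumes "CHAR('a::ring_1) = 2" "P \<in> carrier_mat N N" "P * transpose_mat P = 1\<^sub>m N" "i < N"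
  shows "(\<Sum>k<N. (of_bit (P $$ (k, i)) :: 'a)) = 1"
proof -
  have "(of_bit (P $$ (k, i)) :: 'a) * of_bit (P $$ (k, i)) = of_bit (P $$ (k, i))" for k
    by (cases "P $$ (k, i)") simp_all
  with orthogonal_embed_columns[OF assms assms(4)] show ?thesis by simp
qed

lemma transpose_subst_mat_mult_subst_mat:
  fixes P :: "bit mat" and x y z w :: "'a::comm_ring_1"
  assumes char: "CHAR('a) = 2" and "even N"
    and P: "P \<in> carrier_mat N N" "P * transpose_mat P = 1\<^sub>m N"
    and "x * (w - z) + z * (y - x) = 0" "(y - x) * (w - z) = 1"
  shows "transpose_mat (subst_mat x y P) * subst_mat z w P = 1\<^sub>m N"
proof (rule eq_matI)
  let ?q = "\<lambda>k i. (of_bit (P $$ (k, i)) :: 'a)"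
  fix i j assume "i < dim_row (1\<^sub>m N :: 'a mat)" "j < dim_col (1\<^sub>m N :: 'a mat)"
  then have i: "i < N" and j: "j < N" by auto
  have "(of_nat N :: 'a) = 0"
    using \<open>even N\<close> char by (simp add: of_nat_eq_0_iff_char_dvd)
  have "(transpose_mat (subst_mat x y P) * subst_mat z w P) $$ (i, j)
      = (\<Sum>k<N. (if P $$ (k, i) = 0 then x else y) * (if P $$ (k, j) = 0 then z else w))"
    using P i j by (simp add: scalar_prod_def lessThan_atLeast0)
  also have "\<dots> = (\<Sum>k<N. x * z + x * (w - z) * ?q k j + z * (y - x) * ?q k i
      + (y - x) * (w - z) * (?q k i * ?q k j))"
    by (rule sum.cong) (simp_all only: if_bit_eq_0, simp add: algebra_simps)
  also have "\<dots> = of_nat N * (x * z) + x * (w - z) * (\<Sum>k<N. ?q k j)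
      + z * (y - x) * (\<Sum>k<N. ?q k i) + (y - x) * (w - z) * (\<Sum>k<N. ?q k i * ?q k j)"
    by (simp only: sum.distrib sum_distrib_left[symmetric] sum_constant card_lessThan mult_ac)
  also have "\<dots> = (x * (w - z) + z * (y - x)) + (y - x) * (w - z) * (if i = j then 1 else 0)"
    using odd_embed_column_weight[OF char P] orthogonal_embed_columns[OF char P i j] i j
      \<open>of_nat N = 0\<close> by (simp add: algebra_simps)
  also have "\<dots> = 1\<^sub>m N $$ (i, j)"
    using assms(5,6) i j by simp
  finally show "(transpose_mat (subst_mat x y P) * subst_mat z w P) $$ (i, j) = 1\<^sub>m N $$ (i, j)" .
qed (use P in auto)

lemma CHAR_2_dual_coefficients:
  fixes a b :: "'a::field"
  assumes char: "CHAR('a) = 2" and "a \<noteq> b"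
  defines "c \<equiv> a / (a^2 + b^2)" and "d \<equiv> b / (a^2 + b^2)"
  shows "c * (b - a) + a * (d - c) = 0" and "(d - c) * (b - a) = 1"
proof -
  have "(2::'a) = 0" using of_nat_CHAR[where 'a='a] char by simp
  then have sum_sq: "a^2 + b^2 = (a + b)^2" by (simp add: power2_sum)
  have ba: "b - a = a + b" by (simp add: minus_CHAR_2[OF char] add.commute)
  have ab: "a + b \<noteq> 0" using assms(2) ba by (metis eq_iff_diff_eq_0)
  have dc: "d - c = 1 / (a + b)"
    unfolding c_def d_def sum_sq diff_divide_distrib[symmetric] ba
    using ab by (simp add: power2_eq_square)
  have c: "c * (b - a) = a / (a + b)"
    unfolding c_def sum_sq ba using ab by (simp add: power2_eq_square)
  show "(d - c) * (b - a) = 1"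
    unfolding dc ba using ab by simp
  show "c * (b - a) + a * (d - c) = 0"
    unfolding c dc using CHAR_2_add_self[OF char] by simp
qed

lemma embed_mat_mult_transpose_subst_mat_in_F2_span2:
  fixes H Q :: "bit mat" and a b :: "'a::comm_ring_1"
  assumes char: "CHAR('a) = 2" and "H \<in> carrier_mat R N" "Q \<in> carrier_mat M N"
    and "i < R" "j < M"
  shows "(embed_mat H * transpose_mat (subst_mat a b Q)) $$ (i, j) \<in> F2_span2 a b"
proof -
  let ?u = "\<Sum>k<N. H $$ (i, k)"
  let ?v = "\<Sum>k<N. H $$ (i, k) * Q $$ (j, k)"
  have "(embed_mat H * transpose_mat (subst_mat a b Q)) $$ (i, j)
      = (\<Sum>k<N. of_bit (H $$ (i, k)) * (if Q $$ (j, k) = 0 then a else b))"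
    using assms(2-5) by (simp add: scalar_prod_def lessThan_atLeast0)
  also have "\<dots> = (\<Sum>k<N. a * of_bit (H $$ (i, k))
      + (b - a) * (of_bit (H $$ (i, k)) * of_bit (Q $$ (j, k))))"
    by (rule sum.cong) (simp_all only: if_bit_eq_0, simp add: algebra_simps)
  also have "\<dots> = a * of_bit ?u + (b - a) * of_bit ?v"
    by (simp only: sum.distrib sum_distrib_left[symmetric] of_bit_sum[OF char] of_bit_mult)
  also have "\<dots> = of_bit (?u + ?v) * a + of_bit ?v * b"
    unfolding of_bit_add[OF char] minus_CHAR_2[OF char] by (simp add: algebra_simps)
  finally show ?thesis unfolding F2_span2_def by blast
qed

lemma mult_transpose_eq_0_dual_transform:
  fixes G E Q Q' :: "'a::comm_ring_1 mat"
  assumes "G \<in> carrier_mat K N" "E \<in> carrier_mat R N"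
    and "Q \<in> carrier_mat N N" "Q' \<in> carrier_mat N N"
    and "transpose_mat Q * Q' = 1\<^sub>m N" "G * transpose_mat E = 0\<^sub>m K R"
  shows "(G * transpose_mat Q) * transpose_mat (E * transpose_mat Q') = 0\<^sub>m K R"
proof -
  have "(G * transpose_mat Q) * transpose_mat (E * transpose_mat Q')
      = G * (transpose_mat Q * Q') * transpose_mat E"
    using assms(1-4) by (simp add: transpose_mult assoc_mult_mat[of _ K N _ N _ R])
  also have "\<dots> = G * transpose_mat E"
    using assms(1,5) by simp
  finally show ?thesis using assms(6) by simp
qed

lemma row_space_subset_kernel:
  fixes A B :: "'a::comm_ring_1 mat"
  assumes "A \<in> carrier_mat K N" "B \<in> carrier_mat R N" "A * transpose_mat B = 0\<^sub>m K R"
  shows "{transpose_mat A *\<^sub>v u | u. u \<in> carrier_vec K} \<subseteq> {x \<in> carrier_vec N. B *\<^sub>v x = 0\<^sub>v R}"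
proof clarify
  fix u :: "'a vec" assume u: "u \<in> carrier_vec K"
  have "B *\<^sub>v (transpose_mat A *\<^sub>v u) = (B * transpose_mat A) *\<^sub>v u"
    using assms(1,2) u by (simp add: assoc_mult_mat_vec)
  also have "B * transpose_mat A = transpose_mat (A * transpose_mat B)"
    using assms(1,2) by (simp add: transpose_mult)
  also have "\<dots> *\<^sub>v u = 0\<^sub>v R"
    unfolding assms(3) using u by (intro eq_vecI) auto
  finally show "transpose_mat A *\<^sub>v u \<in> carrier_vec N \<and> B *\<^sub>v (transpose_mat A *\<^sub>v u) = 0\<^sub>v R"
    using assms(1) by (simp add: carrier_vecI)
qed

theorem mainTheorem2:
  fixes m K R N :: nat
    and P :: "bit mat" and H :: "bit mat"
    and G :: "'a::{field,finite} mat"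
    and a b :: "'a"
  assumes "card (UNIV :: 'a set) = 2 ^ m"
    and "m \<ge> 1" and "K \<ge> 1" and "R \<ge> 1"
    and "N > 0" and "even N"
    and "P \<in> carrier_mat N N" and "P * transpose_mat P = 1\<^sub>m N"
    and "a \<noteq> 0" and "b \<noteq> 0" and "a \<noteq> b"
    and "H \<in> carrier_mat R N" and "G \<in> carrier_mat K N"
    and "G * transpose_mat (embed_mat H) = 0\<^sub>m K R"
  shows "(let c = a / (a^2 + b^2); d = b / (a^2 + b^2);
              Gpub = G * transpose_mat (subst_mat c d P);
              Ht = embed_mat H * transpose_mat (subst_mat a b P)
          in (\<forall>i < R. \<forall>j < N. Ht $$ (i, j) \<in> F2_span2 a b)
             \<and> Gpub * transpose_mat Ht = 0\<^sub>m K R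
             \<and> {transpose_mat Gpub *\<^sub>v u | u. u \<in> carrier_vec K}
                 \<subseteq> {x \<in> carrier_vec N. Ht *\<^sub>v x = 0\<^sub>v R})"
proof -
  have char: "CHAR('a) = 2"
    by (rule CHAR_eq_2_if_even_card) (use assms(1,2) in simp)
  define c where "c = a / (a^2 + b^2)"
  define d where "d = b / (a^2 + b^2)"
  define Gpub where "Gpub = G * transpose_mat (subst_mat c d P)"
  define Ht where "Ht = embed_mat H * transpose_mat (subst_mat a b P)"
  have span: "\<forall>i < R. \<forall>j < N. Ht $$ (i, j) \<in> F2_span2 a b"
    unfolding Ht_def
    using embed_mat_mult_transpose_subst_mat_in_F2_span2[OF char assms(12,7)] by blast
  have "transpose_mat (subst_mat c d P) * subst_mat a b P = 1\<^sub>m N"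
    using transpose_subst_mat_mult_subst_mat[OF char assms(6-8)]
      CHAR_2_dual_coefficients[OF char assms(11)] unfolding c_def d_def by blast
  then have orth: "Gpub * transpose_mat Ht = 0\<^sub>m K R"
    unfolding Gpub_def Ht_def using assms(7,12-14)
    by (intro mult_transpose_eq_0_dual_transform) auto
  have "Gpub \<in> carrier_mat K N" "Ht \<in> carrier_mat R N"
    unfolding Gpub_def Ht_def using assms(7,12,13) by auto
  with orth have "{transpose_mat Gpub *\<^sub>v u | u. u \<in> carrier_vec K}
      \<subseteq> {x \<in> carrier_vec N. Ht *\<^sub>v x = 0\<^sub>v R}"
    by (intro row_space_subset_kernel)
  with span orth show ?thesis
    unfolding Let_def Gpub_def Ht_def c_def d_def by blast
qed

end
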